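(* Let $n,p\ge1$ be integers, let $\mathbf{A}^{p+1}_{n+1}$ be as defined in the context, let $M=\max\{n+1,p\}$ and $s(x)=M.x^{M}$. Then $s(a)\vee\sim s(a)=\top$ for every $a\in A$, and $\mathrm{Rad}(\mathbf{A}^{p+1}_{n+1})=\{a\in A:s(a)=\top\}$. Consequently the identity $s(x)\vee\neg s(x)\approx\top$ holds in every algebra of the variety generated by $\mathbf{A}^{p+1}_{n+1}$.
   Context: Order $\mathbb{Z}\times\mathbb{Z}$ lexicographically: $(m,r)\preccurlyeq(k,s)$ iff $m<k$, or $m=k$ and $r\le s$; addition/subtraction of pairs is componentwise, and $\min,\max$ of pairs refer to $\preccurlyeq$. For an integer $n\ge1$ let $L^\omega_{n+1}=\{(m,r)\in\mathbb{Z}^2:(0,0)\preccurlyeq(m,r)\preccurlyeq(n,0)\}$ with $x\ast y=\max\{(0,0),x+y-(n,0)\}$ and $x\to y=\min\{(n,0),(n,0)-x+y\}$. For an integer $p\ge1$ let $L_{p+1}=\{0,1,\dots,p\}$ with $\alpha\ast\beta=\max\{0,\alpha+\beta-p\}$. Define $$A=A^{p+1}_{n+1}=\{\langle(m,r),\alpha\rangle:(m,r)\in L^\omega_{n+1},\ \alpha\in\{0,p\}\}\cup\{\langle(m,r),\alpha\rangle:(0,0)\preccurlyeq(m,r)\preccurlyeq(n-1,0),\ 0<\alpha<p\}.$$ Order: $\langle(m,r),\alpha\rangle\le\langle(k,s),\beta\rangle$ iff one of: (o1) $\alpha\neq0$, $\alpha\le\beta$ and $(m,r)\preccurlyeq(k,s)$;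 (o2) $\alpha=\beta=0$ and $(k,s)\preccurlyeq(m,r)$; (o3) $\alpha=0$, $\beta\ne0$ and $(n-1,0)\preccurlyeq(m+k,r+s)$. $\wedge,\vee$ denote meet and join for $\le$. Put $\bot=\langle(n,0),0\rangle$, $\top=\langle(n,0),p\rangle$. For $a=\langle(m,r),\alpha\rangle$, $b=\langle(k,s),\beta\rangle\in A$ define $a\odot b$ by: (P1) if $\alpha,\beta\ge1$ and $\alpha+\beta>p$: $a\odot b=\langle(m,r)\ast(k,s),\alpha+\beta-p\rangle$; (P2) if $\alpha,\beta\ge1$ and $\alpha+\beta\le p$: $a\odot b=\langle\min\{(n,0),(2n-(m+k+1),-(r+s))\},0\rangle$; (P3) if $\alpha\ge1$, $\beta=0$: $a\odot b=\langle(m,r)\to(k,s),0\rangle$, and if $\alpha=0$, $\beta\ge1$: $a\odot b=\langle(k,s)\to(m,r),0\rangle$; (P4) if $\alpha=\beta=0$: $a\odot b=\langle\min\{(n,0),(m+k+1,r+s)\},0\rangle$. Define $\sim\langle(m,r),\alpha\rangle=\langle(m,r),p-\alpha\rangle$ if $\alpha\in\{0,p\}$, and $\sim\langle(m,r),\alpha\rangle=\langle(n-1-m,-r),p-\alpha\rangle$ if $0<\alpha<p$. Define $a\Rightarrow b=\sim(a\odot\sim b)$ (so $\sim a=a\Rightarrow\bot$, interpreting $\neg x=x\to\bot$). The algebra $\mathbf{A}^{p+1}_{n+1}$ is $\langle A;\odot,\Rightarrow,\wedge,\vee,\bot,\top\rangle$, an algebra of type $(2,2,2,2,0,0)$ in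 the language $\langle\ast,\to,\wedge,\vee,\bot,\top\rangle$. Terms: $a^0=\top$, $a^{k+1}=a\odot a^k$; $a\oplus b=\sim(\sim a\odot\sim b)$; $0.a=\bot$, $(k+1).a=a\oplus k.a$. $\mathrm{Rad}$ is the intersection of all maximal proper implicative filters, where an implicative filter is a subset containing $\top$, closed under $\odot$ and upward closed. *)

theory Defs
  imports Main
begin

definition lexle :: "int \<times> int \<Rightarrow> int \<times> int \<Rightarrow> bool" where
  "lexle x y \<longleftrightarrow> fst x < fst y \<or> (fst x = fst y \<and> snd x \<le> snd y)"

definition lexmin :: "int \<times> int \<Rightarrow> int \<times> int \<Rightarrow> int \<times> int" where
  "lexmin x y = (if lexle x y then x else y)"

definition lexmax :: "int \<times> int \<Rightarrow> int \<times> int \<Rightarrow> int \<times> int" where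
  "lexmax x y = (if lexle x y then y else x)"

definition padd :: "int \<times> int \<Rightarrow> int \<times> int \<Rightarrow> int \<times> int" where
  "padd x y = (fst x + fst y, snd x + snd y)"

definition psub :: "int \<times> int \<Rightarrow> int \<times> int \<Rightarrow> int \<times> int" where
  "psub x y = (fst x - fst y, snd x - snd y)"

definition Lomega :: "nat \<Rightarrow> (int \<times> int) set" where
  "Lomega n = {x. lexle (0,0) x \<and> lexle x (int n, 0)}"

definition lstar :: "nat \<Rightarrow> int \<times> int \<Rightarrow> int \<times> int \<Rightarrow> int \<times> int" where
  "lstar n x y = lexmax (0,0) (psub (padd x y) (int n, 0))"

definition limp :: "nat \<Rightarrow> int \<times> int \<Rightarrow> int \<times> int \<Rightarrow> int \<times> int" where
  "limp n x y = lexmin (int n, 0) (padd (psub (int n, 0) x) y)"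

type_synonym elt = "(int \<times> int) \<times> int"

definition Acar :: "nat \<Rightarrow> nat \<Rightarrow> elt set" where
  "Acar n p =
     {(x, \<alpha>). x \<in> Lomega n \<and> (\<alpha> = 0 \<or> \<alpha> = int p)}
   \<union> {(x, \<alpha>). lexle (0,0) x \<and> lexle x (int n - 1, 0) \<and> 0 < \<alpha> \<and> \<alpha> < int p}"

fun Ale :: "nat \<Rightarrow> nat \<Rightarrow> elt \<Rightarrow> elt \<Rightarrow> bool" where
  "Ale n p (x, \<alpha>) (y, \<beta>) \<longleftrightarrow>
     (\<alpha> \<noteq> 0 \<and> \<alpha> \<le> \<beta> \<and> lexle x y)
   \<or> (\<alpha> = 0 \<and> \<beta> = 0 \<and> lexle y x)
   \<or> (\<alpha> = 0 \<and> \<beta> \<noteq> 0 \<and> lexle (int n - 1, 0) (padd x y))"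

definition Ameet :: "nat \<Rightarrow> nat \<Rightarrow> elt \<Rightarrow> elt \<Rightarrow> elt" where
  "Ameet n p a b = (THE c. c \<in> Acar n p \<and> Ale n p c a \<and> Ale n p c b \<and>
      (\<forall>d\<in>Acar n p. Ale n p d a \<and> Ale n p d b \<longrightarrow> Ale n p d c))"

definition Ajoin :: "nat \<Rightarrow> nat \<Rightarrow> elt \<Rightarrow> elt \<Rightarrow> elt" where
  "Ajoin n p a b = (THE c. c \<in> Acar n p \<and> Ale n p a c \<and> Ale n p b c \<and>
      (\<forall>d\<in>Acar n p. Ale n p a d \<and> Ale n p b d \<longrightarrow> Ale n p c d))"

definition Abot :: "nat \<Rightarrow> nat \<Rightarrow> elt" where
  "Abot n p = ((int n, 0), 0)"

definition Atop :: "nat \<Rightarrow> nat \<Rightarrow> elt" where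
  "Atop n p = ((int n, 0), int p)"

fun Amult :: "nat \<Rightarrow> nat \<Rightarrow> elt \<Rightarrow> elt \<Rightarrow> elt" where
  "Amult n p (x, \<alpha>) (y, \<beta>) =
     (if 1 \<le> \<alpha> \<and> 1 \<le> \<beta> \<and> \<alpha> + \<beta> > int p then (lstar n x y, \<alpha> + \<beta> - int p)
      else if 1 \<le> \<alpha> \<and> 1 \<le> \<beta> then
        (lexmin (int n, 0) (2 * int n - (fst x + fst y + 1), - (snd x + snd y)), 0)
      else if 1 \<le> \<alpha> \<and> \<beta> = 0 then (limp n x y, 0)
      else if \<alpha> = 0 \<and> 1 \<le> \<beta> then (limp n y x, 0)
      else (lexmin (int n, 0) (fst x + fst y + 1, snd x + snd y), 0))"

fun Aneg :: "nat \<Rightarrow> nat \<Rightarrow> elt \<Rightarrow> elt" where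
  "Aneg n p (x, \<alpha>) =
     (if \<alpha> = 0 \<or> \<alpha> = int p then (x, int p - \<alpha>)
      else ((int n - 1 - fst x, - snd x), int p - \<alpha>))"

definition Aimp :: "nat \<Rightarrow> nat \<Rightarrow> elt \<Rightarrow> elt \<Rightarrow> elt" where
  "Aimp n p a b = Aneg n p (Amult n p a (Aneg n p b))"

primrec tpow :: "('a \<Rightarrow> 'a \<Rightarrow> 'a) \<Rightarrow> 'a \<Rightarrow> 'a \<Rightarrow> nat \<Rightarrow> 'a" where
  "tpow mult tp a 0 = tp"
| "tpow mult tp a (Suc k) = mult a (tpow mult tp a k)"

definition toplus :: "('a \<Rightarrow> 'a \<Rightarrow> 'a) \<Rightarrow> ('a \<Rightarrow> 'a) \<Rightarrow> 'a \<Rightarrow> 'a \<Rightarrow> 'a" where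
  "toplus mult neg a b = neg (mult (neg a) (neg b))"

primrec ttimes :: "('a \<Rightarrow> 'a \<Rightarrow> 'a) \<Rightarrow> ('a \<Rightarrow> 'a) \<Rightarrow> 'a \<Rightarrow> nat \<Rightarrow> 'a \<Rightarrow> 'a" where
  "ttimes mult neg bt 0 a = bt"
| "ttimes mult neg bt (Suc k) a = toplus mult neg a (ttimes mult neg bt k a)"

definition sterm :: "('a \<Rightarrow> 'a \<Rightarrow> 'a) \<Rightarrow> ('a \<Rightarrow> 'a) \<Rightarrow> 'a \<Rightarrow> 'a \<Rightarrow> nat \<Rightarrow> 'a \<Rightarrow> 'a" where
  "sterm mult neg bt tp M a = ttimes mult neg bt M (tpow mult tp a M)"

definition Mval :: "nat \<Rightarrow> nat \<Rightarrow> nat" where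
  "Mval n p = max (n + 1) p"

definition sA :: "nat \<Rightarrow> nat \<Rightarrow> elt \<Rightarrow> elt" where
  "sA n p a = sterm (Amult n p) (Aneg n p) (Abot n p) (Atop n p) (Mval n p) a"

definition impl_filter :: "nat \<Rightarrow> nat \<Rightarrow> elt set \<Rightarrow> bool" where
  "impl_filter n p F \<longleftrightarrow> F \<subseteq> Acar n p \<and> Atop n p \<in> F
     \<and> (\<forall>a\<in>F. \<forall>b\<in>F. Amult n p a b \<in> F)
     \<and> (\<forall>a\<in>F. \<forall>b\<in>Acar n p. Ale n p a b \<longrightarrow> b \<in> F)"

definition maximal_filter :: "nat \<Rightarrow> nat \<Rightarrow> elt set \<Rightarrow> bool" where
  "maximal_filter n p F \<longleftrightarrow> impl_filter n p F \<and> F \<noteq> Acar n p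
     \<and> (\<forall>G. impl_filter n p G \<and> G \<noteq> Acar n p \<and> F \<subseteq> G \<longrightarrow> G = F)"

definition Rad :: "nat \<Rightarrow> nat \<Rightarrow> elt set" where
  "Rad n p = {a \<in> Acar n p. \<forall>F. maximal_filter n p F \<longrightarrow> a \<in> F}"

record 'a alg =
  acar :: "'a set"
  amul :: "'a \<Rightarrow> 'a \<Rightarrow> 'a"
  aimp :: "'a \<Rightarrow> 'a \<Rightarrow> 'a"
  ameet :: "'a \<Rightarrow> 'a \<Rightarrow> 'a"
  ajoin :: "'a \<Rightarrow> 'a \<Rightarrow> 'a"
  abot :: "'a"
  atop :: "'a"

definition A_alg :: "nat \<Rightarrow> nat \<Rightarrow> elt alg" where
  "A_alg n p = \<lparr> acar = Acar n p, amul = Amult n p, aimp = Aimp n p,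
      ameet = Ameet n p, ajoin = Ajoin n p, abot = Abot n p, atop = Atop n p \<rparr>"

definition pow_alg :: "'i set \<Rightarrow> 'a alg \<Rightarrow> ('i \<Rightarrow> 'a) alg" where
  "pow_alg I B = \<lparr>
     acar = {f. (\<forall>i\<in>I. f i \<in> acar B) \<and> (\<forall>i. i \<notin> I \<longrightarrow> f i = undefined)},
     amul = (\<lambda>f g i. if i \<in> I then amul B (f i) (g i) else undefined),
     aimp = (\<lambda>f g i. if i \<in> I then aimp B (f i) (g i) else undefined),
     ameet = (\<lambda>f g i. if i \<in> I then ameet B (f i) (g i) else undefined),
     ajoin = (\<lambda>f g i. if i \<in> I then ajoin B (f i) (g i) else undefined),
     abot = (\<lambda>i. if i \<in> I then abot B else undefined),
     atop = (\<lambda>i. if i \<in> I then atop B else undefined) \<rparr>"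

definition subuniverse :: "'a set \<Rightarrow> 'a alg \<Rightarrow> bool" where
  "subuniverse C B \<longleftrightarrow> C \<subseteq> acar B \<and> abot B \<in> C \<and> atop B \<in> C
     \<and> (\<forall>x\<in>C. \<forall>y\<in>C. amul B x y \<in> C \<and> aimp B x y \<in> C \<and> ameet B x y \<in> C \<and> ajoin B x y \<in> C)"

definition hom_onto :: "('a \<Rightarrow> 'b) \<Rightarrow> 'a set \<Rightarrow> 'a alg \<Rightarrow> 'b alg \<Rightarrow> bool" where
  "hom_onto h C B D \<longleftrightarrow> h ` C = acar D \<and> h (abot B) = abot D \<and> h (atop B) = atop D
     \<and> (\<forall>x\<in>C. \<forall>y\<in>C. h (amul B x y) = amul D (h x) (h y) \<and> h (aimp B x y) = aimp D (h x) (h y)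
          \<and> h (ameet B x y) = ameet D (h x) (h y) \<and> h (ajoin B x y) = ajoin D (h x) (h y))"

definition HSP_witness :: "'a alg \<Rightarrow> 'i set \<Rightarrow> ('i \<Rightarrow> 'a) set \<Rightarrow> (('i \<Rightarrow> 'a) \<Rightarrow> 'b) \<Rightarrow> 'b alg \<Rightarrow> bool" where
  "HSP_witness B I C h D \<longleftrightarrow> subuniverse C (pow_alg I B) \<and> hom_onto h C (pow_alg I B) D"

text \<open>The identity s(x) \<or> \<not>s(x) = \<top>, with \<not>x = x \<Rightarrow> \<bottom> and \<sim>x = x \<Rightarrow> \<bottom> in the term language.\<close>
definition satisfies_id :: "nat \<Rightarrow> 'b alg \<Rightarrow> bool" where
  "satisfies_id M D \<longleftrightarrow> (\<forall>x\<in>acar D.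
     (let neg = (\<lambda>y. aimp D y (abot D));
          s = sterm (amul D) neg (abot D) (atop D) M x
      in ajoin D s (neg s) = atop D))"

end

theory Submission
  imports Defs
begin

text \<open>For a \<in> A with level \<alpha> < p, each multiplication by a either moves a bottom-row
  element one step closer to \<bottom> = \<langle>(n,0),0\<rangle> or lowers a middle level by at least one, so
  a^M = \<bottom> because M \<ge> n + 1 and M \<ge> p.  For \<alpha> = p the powers stay in the top row
  {\<langle>x,p\<rangle>}, and \<sim>a^M lies in the bottom row.  Since M.x = \<sim>((\<sim>x)^M), in either case
  s(a) \<in> {\<top>, \<bottom>}, with s(a) = \<top> exactly on the top row.  The top row is an implicative
  filter, and every proper filter lies inside it (it cannot contain a^M = \<bottom> for a off the
  top row), so it is the unique maximal filter, i.e. the radical.  Finally the identity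
  passes from A to homomorphic images of subalgebras of powers.\<close>

lemmas lex_simps = lexle_def lexmin_def lexmax_def padd_def psub_def lstar_def limp_def

lemma Acar_iff:
  "a \<in> Acar n p \<longleftrightarrow> lexle (0,0) (fst a) \<and>
     (lexle (fst a) (int n, 0) \<and> (snd a = 0 \<or> snd a = int p)
      \<or> lexle (fst a) (int n - 1, 0) \<and> 0 < snd a \<and> snd a < int p)"
  by (cases a) (auto simp: Acar_def Lomega_def)

lemma Atop_in_Acar: "Atop n p \<in> Acar n p"
  and Abot_in_Acar: "Abot n p \<in> Acar n p"
  by (auto simp: Atop_def Abot_def Acar_iff lex_simps)

lemma Amult_closed:
  assumes "a \<in> Acar n p" "b \<in> Acar n p"
  shows "Amult n p a b \<in> Acar n p"
proof -
  obtain x1 x2 \<alpha> y1 y2 \<beta> where ab: "a = ((x1, x2), \<alpha>)" "b = ((y1, y2), \<beta>)"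
    by (metis prod.collapse)
  have "0 \<le> \<alpha>" "0 \<le> \<beta>"
    using assms unfolding ab Acar_iff by auto
  then consider "1 \<le> \<alpha>" "1 \<le> \<beta>" "\<alpha> + \<beta> > int p" | "1 \<le> \<alpha>" "1 \<le> \<beta>" "\<alpha> + \<beta> \<le> int p"
    | "1 \<le> \<alpha>" "\<beta> = 0" | "\<alpha> = 0" "1 \<le> \<beta>" | "\<alpha> = 0" "\<beta> = 0"
    by linarith
  then show ?thesis
    by cases (use assms in \<open>simp add: ab Acar_iff lex_simps split: if_splits; linarith\<close>)+
qed

lemma Aneg_closed: "a \<in> Acar n p \<Longrightarrow> Aneg n p a \<in> Acar n p"
  by (cases a) (auto simp: Acar_iff lex_simps)

lemma Aneg_Aneg [simp]: "Aneg n p (Aneg n p a) = a"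
  by (cases a) auto

lemma Aneg_Abot [simp]: "Aneg n p (Abot n p) = Atop n p"
  and Aneg_Atop [simp]: "Aneg n p (Atop n p) = Abot n p"
  by (simp_all add: Abot_def Atop_def)

lemma Amult_Atop: "p \<ge> 1 \<Longrightarrow> a \<in> Acar n p \<Longrightarrow> Amult n p a (Atop n p) = a"
  by (cases a) (auto simp: Atop_def Acar_iff lex_simps)

lemma Aimp_Abot: "p \<ge> 1 \<Longrightarrow> a \<in> Acar n p \<Longrightarrow> Aimp n p a (Abot n p) = Aneg n p a"
  by (simp add: Aimp_def Amult_Atop)

lemma Ale_Atop: "p \<ge> 1 \<Longrightarrow> a \<in> Acar n p \<Longrightarrow> Ale n p a (Atop n p)"
  by (cases a) (auto simp: Atop_def Acar_iff lex_simps)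

lemma Atop_Ale_imp_eq: "p \<ge> 1 \<Longrightarrow> a \<in> Acar n p \<Longrightarrow> Ale n p (Atop n p) a \<Longrightarrow> a = Atop n p"
  by (cases a) (auto simp: Atop_def Acar_iff lex_simps)

lemma Abot_Ale: "a \<in> Acar n p \<Longrightarrow> Ale n p (Abot n p) a"
  by (cases a) (auto simp: Abot_def Acar_iff lex_simps)

lemma Ajoin_Atop:
  assumes "p \<ge> 1" "a \<in> Acar n p" "b \<in> Acar n p" "a = Atop n p \<or> b = Atop n p"
  shows "Ajoin n p a b = Atop n p"
  unfolding Ajoin_def
proof (rule the_equality)
  show "Atop n p \<in> Acar n p \<and> Ale n p a (Atop n p) \<and> Ale n p b (Atop n p) \<and>
      (\<forall>d\<in>Acar n p. Ale n p a d \<and> Ale n p b d \<longrightarrow> Ale n p (Atop n p) d)"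
    using assms Atop_in_Acar Ale_Atop by blast
qed (use assms Atop_Ale_imp_eq in blast)

lemma tpow_closed:
  assumes "\<And>x y. x \<in> S \<Longrightarrow> y \<in> S \<Longrightarrow> mult x y \<in> S" "tp \<in> S" "a \<in> S"
  shows "tpow mult tp a k \<in> S"
  by (induction k) (simp_all add: assms)

lemma ttimes_closed:
  assumes "\<And>x y. x \<in> S \<Longrightarrow> y \<in> S \<Longrightarrow> mult x y \<in> S" "\<And>x. x \<in> S \<Longrightarrow> neg x \<in> S"
    "bt \<in> S" "a \<in> S"
  shows "ttimes mult neg bt k a \<in> S"
  by (induction k) (simp_all add: assms toplus_def)

lemma sterm_closed:
  assumes "\<And>x y. x \<in> S \<Longrightarrow> y \<in> S \<Longrightarrow> mult x y \<in> S" "\<And>x. x \<in> S \<Longrightarrow> neg x \<in> S"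
    "bt \<in> S" "tp \<in> S" "a \<in> S"
  shows "sterm mult neg bt tp M a \<in> S"
  unfolding sterm_def using assms by (intro ttimes_closed tpow_closed)

lemma tpow_hom:
  assumes "\<And>x y. x \<in> S \<Longrightarrow> y \<in> S \<Longrightarrow> mult x y \<in> S" "tp \<in> S" "a \<in> S"
    and "\<And>x y. x \<in> S \<Longrightarrow> y \<in> S \<Longrightarrow> h (mult x y) = mult' (h x) (h y)" "h tp = tp'"
  shows "h (tpow mult tp a k) = tpow mult' tp' (h a) k"
  by (induction k) (simp_all add: assms tpow_closed[of S mult, OF assms(1-3)])

lemma ttimes_hom:
  assumes "\<And>x y. x \<in> S \<Longrightarrow> y \<in> S \<Longrightarrow> mult x y \<in> S" "\<And>x. x \<in> S \<Longrightarrow> neg x \<in> S"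
    "bt \<in> S" "a \<in> S"
    and "\<And>x y. x \<in> S \<Longrightarrow> y \<in> S \<Longrightarrow> h (mult x y) = mult' (h x) (h y)"
    "\<And>x. x \<in> S \<Longrightarrow> h (neg x) = neg' (h x)" "h bt = bt'"
  shows "h (ttimes mult neg bt k a) = ttimes mult' neg' bt' k (h a)"
  by (induction k) (simp_all add: assms toplus_def ttimes_closed[of S mult neg, OF assms(1-4)])

lemma sterm_hom:
  assumes "\<And>x y. x \<in> S \<Longrightarrow> y \<in> S \<Longrightarrow> mult x y \<in> S" "\<And>x. x \<in> S \<Longrightarrow> neg x \<in> S"
    "bt \<in> S" "tp \<in> S" "a \<in> S"
    and "\<And>x y. x \<in> S \<Longrightarrow> y \<in> S \<Longrightarrow> h (mult x y) = mult' (h x) (h y)"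
    "\<And>x. x \<in> S \<Longrightarrow> h (neg x) = neg' (h x)" "h bt = bt'" "h tp = tp'"
  shows "h (sterm mult neg bt tp M a) = sterm mult' neg' bt' tp' M (h a)"
proof -
  have "tpow mult tp a M \<in> S"
    using assms(1,4,5) by (rule tpow_closed)
  then show ?thesis
    unfolding sterm_def
    using ttimes_hom[of S mult neg, OF assms(1-3) _ assms(6-8)] tpow_hom[of S mult, OF assms(1,4,5,6,9)]
    by simp
qed

lemma ttimes_eq_neg_tpow:
  assumes "\<And>y. neg (neg y) = y"
  shows "ttimes mult neg bt k a = neg (tpow mult (neg bt) (neg a) k)"
  by (induction k) (simp_all add: toplus_def assms)

text \<open>In the bottom row the order is reversed, so \<bottom> = \<langle>(n,0),0\<rangle> has the largest
  coordinate.  For a off the top row, a^(k+1) either lies in the bottom row with coordinate at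
  least min(k,n), or in a middle row of level below p - k with coordinate (0,0) or at most
  (n-1-k,0); the coordinate (0,0) comes from the truncation in \<ast>.\<close>

definition near_bot :: "nat \<Rightarrow> nat \<Rightarrow> elt \<Rightarrow> bool" where
  "near_bot n k t \<longleftrightarrow> snd t = 0 \<and> lexle (min (int k) (int n), 0) (fst t) \<and> lexle (fst t) (int n, 0)"

definition mid_within :: "nat \<Rightarrow> nat \<Rightarrow> nat \<Rightarrow> elt \<Rightarrow> bool" where
  "mid_within n p k t \<longleftrightarrow> 0 < snd t \<and> snd t + int k < int p \<and> lexle (0,0) (fst t)
     \<and> (fst t = (0,0) \<or> lexle (fst t) (int n - 1 - int k, 0))"

lemma not_top_row_cases:
  assumes "a \<in> Acar n p" "snd a \<noteq> int p"
  shows "near_bot n 0 a \<or> mid_within n p 0 a"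
  using assms by (auto simp: Acar_iff near_bot_def mid_within_def lex_simps)

lemma near_bot_Amult:
  assumes "a \<in> Acar n p" "snd a \<noteq> int p" "near_bot n k t"
  shows "near_bot n (Suc k) (Amult n p a t)"
proof -
  obtain x1 x2 \<alpha> y1 y2 where at: "a = ((x1, x2), \<alpha>)" "t = ((y1, y2), 0)"
    using assms(3) unfolding near_bot_def by (metis prod.collapse)
  have x: "lexle (0,0) (x1, x2)" and y: "lexle (min (int k) (int n), 0) (y1, y2)" "lexle (y1, y2) (int n, 0)"
    using assms unfolding at by (auto simp: Acar_iff near_bot_def)
  consider "\<alpha> = 0" | "0 < \<alpha>" "lexle (x1, x2) (int n - 1, 0)"
    using assms unfolding at by (auto simp: Acar_iff)
  then show ?thesis
    using x y unfolding at by cases (auto simp: near_bot_def lex_simps)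
qed

lemma mid_within_Amult:
  assumes "a \<in> Acar n p" "snd a \<noteq> int p" "mid_within n p k t"
  shows "near_bot n (Suc k) (Amult n p a t) \<or> mid_within n p (Suc k) (Amult n p a t)"
proof -
  obtain x1 x2 \<alpha> y1 y2 \<beta> where at: "a = ((x1, x2), \<alpha>)" "t = ((y1, y2), \<beta>)"
    by (metis prod.collapse)
  have x: "lexle (0,0) (x1, x2)" and y: "0 < \<beta>" "\<beta> + int k < int p" "lexle (0,0) (y1, y2)"
    "(y1, y2) = (0,0) \<or> lexle (y1, y2) (int n - 1 - int k, 0)"
    using assms unfolding at by (auto simp: Acar_iff mid_within_def)
  consider "\<alpha> = 0" "lexle (x1, x2) (int n, 0)"
    | "0 < \<alpha>" "\<alpha> + \<beta> > int p" "\<alpha> < int p" "lexle (x1, x2) (int n - 1, 0)"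
    | "0 < \<alpha>" "\<alpha> + \<beta> \<le> int p" "lexle (x1, x2) (int n - 1, 0)"
    using assms unfolding at by (cases "\<alpha> + \<beta> > int p") (auto simp: Acar_iff)
  then show ?thesis
  proof cases
    case 1
    then have "near_bot n (Suc k) (Amult n p a t)"
      using x y unfolding at by (auto simp: near_bot_def lex_simps)
    then show ?thesis ..
  next
    case 2
    then have "mid_within n p (Suc k) (Amult n p a t)"
      using x y unfolding at by (auto simp: mid_within_def lex_simps)
    then show ?thesis ..
  next
    case 3
    then have "near_bot n (Suc k) (Amult n p a t)"
      using x y unfolding at by (auto simp: near_bot_def lex_simps)
    then show ?thesis ..
  qed
qed

lemma tpow_not_top_row:
  assumes "p \<ge> 1" "a \<in> Acar n p" "snd a \<noteq> int p"
  shows "near_bot n k (tpow (Amult n p) (Atop n p) a (Suc k))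
    \<or> mid_within n p k (tpow (Amult n p) (Atop n p) a (Suc k))"
proof (induction k)
  case 0
  then show ?case using not_top_row_cases[OF assms(2,3)] by (simp add: Amult_Atop[OF assms(1,2)])
next
  case (Suc k)
  let ?t = "tpow (Amult n p) (Atop n p) a (Suc k)"
  have "tpow (Amult n p) (Atop n p) a (Suc (Suc k)) = Amult n p a ?t"
    by simp
  then show ?case
    using Suc.IH near_bot_Amult[OF assms(2,3), of k ?t] mid_within_Amult[OF assms(2,3), of k ?t]
    by presburger
qed

lemma Mval_Suc: obtains k where "Mval n p = Suc k" "n \<le> k" "p \<le> Suc k"
  using that[of "Mval n p - 1"] by (auto simp: Mval_def)

lemma tpow_Mval_not_top_row:
  assumes "p \<ge> 1" "a \<in> Acar n p" "snd a \<noteq> int p"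
  shows "tpow (Amult n p) (Atop n p) a (Mval n p) = Abot n p"
proof -
  obtain k where k: "Mval n p = Suc k" "n \<le> k" "p \<le> Suc k" by (rule Mval_Suc)
  have "\<not> mid_within n p k t" for t
    using k(3) by (auto simp: mid_within_def)
  then have "near_bot n k (tpow (Amult n p) (Atop n p) a (Suc k))"
    using tpow_not_top_row[OF assms] by blast
  then show ?thesis
    using k(2) unfolding k(1) by (auto simp: near_bot_def Abot_def lexle_def prod_eq_iff)
qed

lemma tpow_Atop: "p \<ge> 1 \<Longrightarrow> tpow (Amult n p) (Atop n p) (Atop n p) k = Atop n p"
  by (induction k) (simp_all add: Amult_Atop Atop_in_Acar)

definition top_row :: "nat \<Rightarrow> nat \<Rightarrow> elt set" where
  "top_row n p = {a \<in> Acar n p. snd a = int p}"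

lemma Atop_in_top_row: "Atop n p \<in> top_row n p"
  using Atop_in_Acar[of n p] by (simp add: top_row_def Atop_def)

lemma Amult_top_row:
  assumes "p \<ge> 1" "a \<in> top_row n p" "b \<in> top_row n p"
  shows "Amult n p a b \<in> top_row n p"
  using assms Amult_closed[of a n p b] by (cases a; cases b) (auto simp: top_row_def)

lemma Aneg_top_row:
  assumes "p \<ge> 1" "a \<in> top_row n p"
  shows "Aneg n p a \<in> Acar n p" "snd (Aneg n p a) \<noteq> int p"
  using assms Aneg_closed[of a n p] by (cases a; auto simp: top_row_def)+

lemma sA_eq_neg_tpow:
  "sA n p a = Aneg n p (tpow (Amult n p) (Atop n p)
      (Aneg n p (tpow (Amult n p) (Atop n p) a (Mval n p))) (Mval n p))"
  unfolding sA_def sterm_def by (simp add: ttimes_eq_neg_tpow[where neg = "Aneg n p"])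

lemma sA_top_row:
  assumes "p \<ge> 1" "a \<in> top_row n p"
  shows "sA n p a = Atop n p"
proof -
  have "tpow (Amult n p) (Atop n p) a (Mval n p) \<in> top_row n p"
    using Amult_top_row[OF assms(1)] Atop_in_top_row assms(2) by (rule tpow_closed)
  then show ?thesis
    using tpow_Mval_not_top_row[OF assms(1) Aneg_top_row[OF assms(1)]] by (simp add: sA_eq_neg_tpow)
qed

lemma sA_not_top_row:
  assumes "p \<ge> 1" "a \<in> Acar n p" "snd a \<noteq> int p"
  shows "sA n p a = Abot n p"
  using assms by (simp add: sA_eq_neg_tpow tpow_Mval_not_top_row tpow_Atop)

lemma sA_in_Acar: "a \<in> Acar n p \<Longrightarrow> sA n p a \<in> Acar n p"
  unfolding sA_def using Amult_closed Aneg_closed Abot_in_Acar Atop_in_Acar by (rule sterm_closed)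

lemma sA_join_Aneg:
  assumes "p \<ge> 1" "a \<in> Acar n p"
  shows "Ajoin n p (sA n p a) (Aneg n p (sA n p a)) = Atop n p"
  using assms sA_top_row sA_not_top_row Ajoin_Atop Atop_in_Acar Abot_in_Acar
  by (cases "snd a = int p") (auto simp: top_row_def)

lemma top_row_filter:
  assumes "p \<ge> 1"
  shows "impl_filter n p (top_row n p)"
proof -
  have "top_row n p \<subseteq> Acar n p"
    by (auto simp: top_row_def)
  moreover have "b \<in> top_row n p"
    if "a \<in> top_row n p" "b \<in> Acar n p" "Ale n p a b" for a b
    using that by (cases a; cases b) (auto simp: top_row_def Acar_iff)
  ultimately show ?thesis
    unfolding impl_filter_def using Atop_in_top_row Amult_top_row[OF assms] by blast
qed

lemma proper_filter_subset_top_row: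
  assumes "p \<ge> 1" "impl_filter n p G" "G \<noteq> Acar n p"
  shows "G \<subseteq> top_row n p"
proof
  fix b assume b: "b \<in> G"
  have G: "G \<subseteq> Acar n p" "Atop n p \<in> G" "\<And>x y. x \<in> G \<Longrightarrow> y \<in> G \<Longrightarrow> Amult n p x y \<in> G"
      "\<And>x y. x \<in> G \<Longrightarrow> y \<in> Acar n p \<Longrightarrow> Ale n p x y \<Longrightarrow> y \<in> G"
    using assms(2) by (auto simp: impl_filter_def)
  show "b \<in> top_row n p"
  proof (rule ccontr)
    assume "b \<notin> top_row n p"
    then have "tpow (Amult n p) (Atop n p) b (Mval n p) = Abot n p"
      using assms(1) b G(1) by (intro tpow_Mval_not_top_row) (auto simp: top_row_def)
    moreover have "tpow (Amult n p) (Atop n p) b (Mval n p) \<in> G"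
      using G(3,2) b by (rule tpow_closed)
    ultimately have "Abot n p \<in> G"
      by simp
    with G(4) Abot_Ale have "Acar n p \<subseteq> G"
      by blast
    with G(1) assms(3) show False by blast
  qed
qed

lemma maximal_filter_iff_top_row:
  assumes "p \<ge> 1"
  shows "maximal_filter n p F \<longleftrightarrow> F = top_row n p"
proof -
  have "Abot n p \<notin> top_row n p"
    using assms by (simp add: top_row_def Abot_def)
  then have proper: "top_row n p \<noteq> Acar n p"
    using Abot_in_Acar by blast
  show ?thesis
    unfolding maximal_filter_def
    using top_row_filter[OF assms] proper proper_filter_subset_top_row[OF assms] by blast
qed

lemma Rad_eq_top_row: "p \<ge> 1 \<Longrightarrow> Rad n p = top_row n p"
  by (auto simp: Rad_def maximal_filter_iff_top_row top_row_def)

lemma sA_eq_Atop_iff: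
  assumes "p \<ge> 1" "a \<in> Acar n p"
  shows "sA n p a = Atop n p \<longleftrightarrow> a \<in> top_row n p"
proof (cases "snd a = int p")
  case True
  then show ?thesis
    using assms sA_top_row by (simp add: top_row_def)
next
  case False
  then show ?thesis
    using assms sA_not_top_row by (simp add: top_row_def Abot_def Atop_def)
qed

definition alg_neg :: "'a alg \<Rightarrow> 'a \<Rightarrow> 'a" where
  "alg_neg D = (\<lambda>y. aimp D y (abot D))"

definition alg_s :: "nat \<Rightarrow> 'a alg \<Rightarrow> 'a \<Rightarrow> 'a" where
  "alg_s M D = sterm (amul D) (alg_neg D) (abot D) (atop D) M"

lemma satisfies_id_iff:
  "satisfies_id M D \<longleftrightarrow> (\<forall>x\<in>acar D. ajoin D (alg_s M D x) (alg_neg D (alg_s M D x)) = atop D)"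
  by (simp add: satisfies_id_def alg_s_def alg_neg_def Let_def)

lemma alg_s_A_alg:
  assumes "p \<ge> 1" "a \<in> Acar n p"
  shows "alg_s (Mval n p) (A_alg n p) a = sA n p a"
proof -
  have "id (alg_s (Mval n p) (A_alg n p) a) = sA n p (id a)"
    unfolding alg_s_def sA_def
    using Amult_closed Aneg_closed Abot_in_Acar Atop_in_Acar assms(2) Aimp_Abot[OF assms(1)]
    by (intro sterm_hom[where S = "Acar n p"]) (auto simp: A_alg_def alg_neg_def)
  then show ?thesis by simp
qed

lemma satisfies_id_A_alg:
  assumes "p \<ge> 1"
  shows "satisfies_id (Mval n p) (A_alg n p)"
  unfolding satisfies_id_iff
proof
  fix a assume "a \<in> acar (A_alg n p)"
  then have a: "a \<in> Acar n p"
    by (simp add: A_alg_def)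
  have neg: "alg_neg (A_alg n p) (sA n p a) = Aneg n p (sA n p a)"
    using Aimp_Abot[OF assms sA_in_Acar[OF a]] by (simp add: alg_neg_def A_alg_def)
  show "ajoin (A_alg n p) (alg_s (Mval n p) (A_alg n p) a)
      (alg_neg (A_alg n p) (alg_s (Mval n p) (A_alg n p) a)) = atop (A_alg n p)"
    unfolding alg_s_A_alg[OF assms a] neg using sA_join_Aneg[OF assms a] by (simp add: A_alg_def)
qed

lemma satisfies_id_pow_alg:
  assumes "satisfies_id M B"
  shows "satisfies_id M (pow_alg I B)"
  unfolding satisfies_id_iff
proof
  fix f assume f: "f \<in> acar (pow_alg I B)"
  have eval: "alg_s M (pow_alg I B) f i = alg_s M B (f i)" if "i \<in> I" for i
    unfolding alg_s_def using that
    by (intro sterm_hom[where S = UNIV and h = "\<lambda>f. f i"]) (auto simp: pow_alg_def alg_neg_def)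
  show "ajoin (pow_alg I B) (alg_s M (pow_alg I B) f) (alg_neg (pow_alg I B) (alg_s M (pow_alg I B) f))
      = atop (pow_alg I B)"
  proof
    fix i show "ajoin (pow_alg I B) (alg_s M (pow_alg I B) f) (alg_neg (pow_alg I B) (alg_s M (pow_alg I B) f)) i
        = atop (pow_alg I B) i"
      using assms f eval by (auto simp: satisfies_id_iff pow_alg_def alg_neg_def)
  qed
qed

lemma satisfies_id_hom_image:
  assumes "satisfies_id M P" "subuniverse C P" "hom_onto h C P D"
  shows "satisfies_id M D"
  unfolding satisfies_id_iff
proof
  have C: "\<And>x y. x \<in> C \<Longrightarrow> y \<in> C \<Longrightarrow> amul P x y \<in> C" "\<And>x. x \<in> C \<Longrightarrow> alg_neg P x \<in> C"
      "abot P \<in> C" "atop P \<in> C" "C \<subseteq> acar P"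
    using assms(2) by (auto simp: subuniverse_def alg_neg_def)
  have h: "\<And>x y. x \<in> C \<Longrightarrow> y \<in> C \<Longrightarrow> h (amul P x y) = amul D (h x) (h y)"
      "\<And>x. x \<in> C \<Longrightarrow> h (alg_neg P x) = alg_neg D (h x)"
      "\<And>x y. x \<in> C \<Longrightarrow> y \<in> C \<Longrightarrow> h (ajoin P x y) = ajoin D (h x) (h y)"
      "h (abot P) = abot D" "h (atop P) = atop D" "h ` C = acar D"
    using assms(3) C(3) by (auto simp: hom_onto_def alg_neg_def)
  fix x assume "x \<in> acar D"
  then obtain c where c: "c \<in> C" "x = h c"
    using h(6) by blast
  have s: "alg_s M P c \<in> C"
    unfolding alg_s_def using C(1-4) c(1) by (rule sterm_closed)
  have hs: "h (alg_s M P c) = alg_s M D x"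
    unfolding alg_s_def c(2) using C(1-4) c(1) h(1,2,4,5) by (rule sterm_hom)
  have "ajoin P (alg_s M P c) (alg_neg P (alg_s M P c)) = atop P"
    using assms(1) C(5) c(1) by (auto simp: satisfies_id_iff)
  then show "ajoin D (alg_s M D x) (alg_neg D (alg_s M D x)) = atop D"
    using s hs C(2) h(2,3,5) by metis
qed

lemma satisfies_id_HSP:
  "satisfies_id M B \<Longrightarrow> HSP_witness B I C h D \<Longrightarrow> satisfies_id M D"
  unfolding HSP_witness_def by (blast intro: satisfies_id_hom_image satisfies_id_pow_alg)

theorem corollary3p7:
  fixes n p :: nat
  assumes "n \<ge> 1" and "p \<ge> 1"
  shows "(\<forall>a\<in>Acar n p. Ajoin n p (sA n p a) (Aneg n p (sA n p a)) = Atop n p)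
       \<and> Rad n p = {a \<in> Acar n p. sA n p a = Atop n p}
       \<and> (\<forall>(I::'i set) C (h :: ('i \<Rightarrow> elt) \<Rightarrow> 'b) (D :: 'b alg).
            HSP_witness (A_alg n p) I C h D \<longrightarrow> satisfies_id (Mval n p) D)"
proof (intro conjI ballI allI impI)
  show "Ajoin n p (sA n p a) (Aneg n p (sA n p a)) = Atop n p" if "a \<in> Acar n p" for a
    using assms(2) that by (rule sA_join_Aneg)
  show "Rad n p = {a \<in> Acar n p. sA n p a = Atop n p}"
    using sA_eq_Atop_iff[OF assms(2)] by (auto simp: Rad_eq_top_row[OF assms(2)] top_row_def)
  show "satisfies_id (Mval n p) D" if "HSP_witness (A_alg n p) I C h D" for I :: "'i set" and C h D
    using satisfies_id_A_alg[OF assms(2)] that by (rule satisfies_id_HSP)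
qed

end
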